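(* Let $H=\mathrm{diag}(\lambda_1,\dots,\lambda_d)$ with $\lambda_1\ge\dots\ge\lambda_d>0$, and set $L=\lambda_1$ and $\mu=\lambda_d$, in the setting of the context. Assume $\mathbb{E}[n_tn_t^\top]\preceq\sigma^2H$ for all $t$. Run SGD from $w_1$ with inverse time step size $\eta_t=\frac{1}{L+\mu t}$, that is, $w_{t+1}=w_t-\eta_t(H(\xi_t)w_t-b(\xi_t))$ for $t=1,2,\dots$ Then for every $t\ge1$, $$2\mathbb{E}[f(w_{t+1})-f(w_* )]=\mathbb{E}\left[\sum_{j=1}^d\lambda_j(w_{t+1,j}-w_{*,j})^2\right]\le\left(\frac{L+\mu}{L+\mu t}\right)^2\sum_{j=1}^d\lambda_j(w_{1,j}-w_{*,j})^2+\sum_{j=1}^d\left(\frac{\lambda_j^2}{2\lambda_j-\mu}\cdot\frac{\sigma^2}{L+\mu t}+\frac{\lambda_j^2\sigma^2}{(L+\mu t)^2}\right).$$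
   Context: Let $\xi$ be a random data sample, $H(\xi)\in\mathbb{R}^{d\times d}$ a random symmetric matrix and $b(\xi)\in\mathbb{R}^d$ a random vector. Define $f(w,\xi)=\frac12w^\top H(\xi)w-b(\xi)^\top w$ and $f(w)=\mathbb{E}_\xi f(w,\xi)$. Set $H=\mathbb{E}H(\xi)$ and $b=\mathbb{E}b(\xi)$, with $w_*=H^{-1}b$. $\xi_1,\xi_2,\dots$ are i.i.d. copies of $\xi$, the initial point $w_1$ is deterministic, and $n_t=(Hw_t-b)-(H(\xi_t)w_t-b(\xi_t))$. The notation $w_{t,j}$ denotes the $j$-th coordinate of $w_t$. *)

theory Defs
  imports "HOL-Probability.Probability"
begin

text \<open>Vectors in R^d are functions nat => real (only coordinates 1..d matter);
  d x d matrices are functions nat => nat => real (only entries in {1..d}^2 matter).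
  The data samples xi t (t >= 1) are random variables on the probability space M
  with values in the measurable space N; Hs and bs map a sample to H(xi) and b(xi).\<close>

text \<open>SGD iterates: sgd_iter ... k is w_(k+1); the step producing w_(t+1) uses
  sample xi t and step size eta_t = 1/(L + mu t).\<close>
primrec sgd_iter ::
  "(nat \<Rightarrow> 'a \<Rightarrow> 'b) \<Rightarrow> ('b \<Rightarrow> nat \<Rightarrow> nat \<Rightarrow> real) \<Rightarrow> ('b \<Rightarrow> nat \<Rightarrow> real) \<Rightarrow> nat \<Rightarrow>
   real \<Rightarrow> real \<Rightarrow> (nat \<Rightarrow> real) \<Rightarrow> nat \<Rightarrow> 'a \<Rightarrow> nat \<Rightarrow> real" where
  "sgd_iter \<xi> Hs bs d L \<mu> w1 0 \<omega> = w1"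
| "sgd_iter \<xi> Hs bs d L \<mu> w1 (Suc k) \<omega> =
     (let w = sgd_iter \<xi> Hs bs d L \<mu> w1 k \<omega>;
          \<eta> = 1 / (L + \<mu> * real (Suc k))
      in (\<lambda>j. w j - \<eta> * ((\<Sum>i=1..d. Hs (\<xi> (Suc k) \<omega>) j i * w i) - bs (\<xi> (Suc k) \<omega>) j)))"

definition Hmean :: "'a measure \<Rightarrow> (nat \<Rightarrow> 'a \<Rightarrow> 'b) \<Rightarrow> ('b \<Rightarrow> nat \<Rightarrow> nat \<Rightarrow> real) \<Rightarrow> nat \<Rightarrow> nat \<Rightarrow> real" where
  "Hmean M \<xi> Hs = (\<lambda>i k. \<integral>\<omega>. Hs (\<xi> 1 \<omega>) i k \<partial>M)"

definition bmean :: "'a measure \<Rightarrow> (nat \<Rightarrow> 'a \<Rightarrow> 'b) \<Rightarrow> ('b \<Rightarrow> nat \<Rightarrow> real) \<Rightarrow> nat \<Rightarrow> real" where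
  "bmean M \<xi> bs = (\<lambda>i. \<integral>\<omega>. bs (\<xi> 1 \<omega>) i \<partial>M)"

definition fobj :: "'a measure \<Rightarrow> (nat \<Rightarrow> 'a \<Rightarrow> 'b) \<Rightarrow> ('b \<Rightarrow> nat \<Rightarrow> nat \<Rightarrow> real) \<Rightarrow> ('b \<Rightarrow> nat \<Rightarrow> real) \<Rightarrow> nat \<Rightarrow> (nat \<Rightarrow> real) \<Rightarrow> real" where
  "fobj M \<xi> Hs bs d w = (\<integral>\<omega>. (1/2) * (\<Sum>i=1..d. \<Sum>k=1..d. w i * Hs (\<xi> 1 \<omega>) i k * w k)
                                 - (\<Sum>j=1..d. bs (\<xi> 1 \<omega>) j * w j) \<partial>M)"

definition noise ::
  "'a measure \<Rightarrow> (nat \<Rightarrow> 'a \<Rightarrow> 'b) \<Rightarrow> ('b \<Rightarrow> nat \<Rightarrow> nat \<Rightarrow> real) \<Rightarrow> ('b \<Rightarrow> nat \<Rightarrow> real) \<Rightarrow> nat \<Rightarrow>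
   real \<Rightarrow> real \<Rightarrow> (nat \<Rightarrow> real) \<Rightarrow> nat \<Rightarrow> 'a \<Rightarrow> nat \<Rightarrow> real" where
  "noise M \<xi> Hs bs d L \<mu> w1 t \<omega> j =
     (let w = sgd_iter \<xi> Hs bs d L \<mu> w1 (t - 1) \<omega> in
      ((\<Sum>i=1..d. Hmean M \<xi> Hs j i * w i) - bmean M \<xi> bs j)
      - ((\<Sum>i=1..d. Hs (\<xi> t \<omega>) j i * w i) - bs (\<xi> t \<omega>) j))"

end

(*
  Because the mean Hessian H is diagonal, the error e_t = w_t - wstar evolves coordinatewise,
    e_(t+1,j) = (1 - eta_t lambda_j) e_(t,j) + eta_t n_(t,j).
  The noise n_t = (H - H(xi_t)) w_t - (b - b(xi_t)) pairs factors that depend only on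
  xi_1, ..., xi_(t-1) with centred functions of xi_t, so independence kills the cross term,
  and the noise assumption with v = e_j gives E n_(t,j)^2 <= sigma^2 lambda_j. Hence
    E e_(t+1,j)^2 <= (1 - eta_t lambda_j)^2 E e_(t,j)^2 + eta_t^2 lambda_j sigma^2.
  For eta_t = 1/(L + mu t) this recursion is closed by induction on the bound
    (L/x)^2 e_1^2 + s/((2 lambda - mu) x) + s/x^2   with x = L + mu t, s = lambda sigma^2,
  whose inductive step reduces to the cubic inequality
    (x - lambda)^2 (x + 2 lambda - 2 mu) <= x (x - mu)^2   for mu <= lambda <= x.
  Weighting by lambda_j and summing over j gives the bound, and
  2 (f(w) - f(wstar)) = sum_j lambda_j (w_j - wstar_j)^2 because b = H wstar.
*)

theory Submission
  imports Defs
begin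

lemma inverse_time_cubic_le:
  fixes x lm mu :: real
  assumes "0 \<le> mu" "mu \<le> lm" "lm \<le> x"
  shows "(x - lm)\<^sup>2 * (x + 2 * lm - 2 * mu) \<le> x * (x - mu)\<^sup>2"
proof -
  have factor: "x * (x - mu)\<^sup>2 - (x - lm)\<^sup>2 * (x + 2 * lm - 2 * mu)
      = (lm - mu) * ((3 * lm - mu) * x - 2 * lm\<^sup>2)"
    by (simp add: power2_eq_square algebra_simps)
  have "(3 * lm - mu) * lm \<le> (3 * lm - mu) * x"
    using assms by (intro mult_left_mono) auto
  moreover have "lm * mu \<le> lm * lm"
    using assms by (intro mult_left_mono) auto
  then have "2 * lm\<^sup>2 \<le> (3 * lm - mu) * lm"
    by (simp add: power2_eq_square algebra_simps)
  ultimately have "0 \<le> (lm - mu) * ((3 * lm - mu) * x - 2 * lm\<^sup>2)"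
    using assms by (intro mult_nonneg_nonneg) auto
  with factor show ?thesis by linarith
qed

lemma inverse_time_noise_step_le:
  fixes K x lm mu :: real
  assumes "0 \<le> mu" "mu \<le> lm" "lm \<le> x" "mu < x" "0 \<le> K"
  shows "(1 - lm / x)\<^sup>2 * (K / (x - mu) + K * (2 * lm - mu) / (x - mu)\<^sup>2) \<le> K / x"
proof -
  have pos: "0 < x - mu" "0 < x" using assms by auto
  have "K / (x - mu) = K * (x - mu) / (x - mu)\<^sup>2"
    using pos by (simp add: power2_eq_square)
  moreover have "K * (x - mu) + K * (2 * lm - mu) = K * (x + 2 * lm - 2 * mu)"
    by (simp add: algebra_simps)
  ultimately have "K / (x - mu) + K * (2 * lm - mu) / (x - mu)\<^sup>2 = K * (x + 2 * lm - 2 * mu) / (x - mu)\<^sup>2"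
    by (metis add_divide_distrib)
  moreover have "1 - lm / x = (x - lm) / x"
    using pos by (simp add: field_simps)
  ultimately have "(1 - lm / x)\<^sup>2 * (K / (x - mu) + K * (2 * lm - mu) / (x - mu)\<^sup>2)
      = K * ((x - lm)\<^sup>2 * (x + 2 * lm - 2 * mu)) / (x\<^sup>2 * (x - mu)\<^sup>2)"
    by (simp add: power_divide)
  also have "\<dots> \<le> K * (x * (x - mu)\<^sup>2) / (x\<^sup>2 * (x - mu)\<^sup>2)"
    using inverse_time_cubic_le[of mu lm x] assms
    by (intro divide_right_mono mult_left_mono) auto
  also have "\<dots> = K / x"
    using pos by (simp add: power2_eq_square)
  finally show ?thesis .
qed

lemma inverse_time_step_le:
  fixes L mu lm s x a a0 :: real
  assumes mu: "0 < mu" "mu \<le> lm" "lm \<le> L" and x: "L + mu \<le> x"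
    and s: "0 \<le> s" and a0: "0 \<le> a0"
    and a: "a \<le> (L / (x - mu))\<^sup>2 * a0 + s / (2 * lm - mu) / (x - mu) + s / (x - mu)\<^sup>2"
  shows "(1 - lm / x)\<^sup>2 * a + s / x\<^sup>2 \<le> (L / x)\<^sup>2 * a0 + s / (2 * lm - mu) / x + s / x\<^sup>2"
proof -
  define K where "K = s / (2 * lm - mu)"
  have pos: "0 < x - mu" "0 < x" "0 \<le> x - lm" "0 < 2 * lm - mu" using mu x by auto
  have K: "0 \<le> K" "s = K * (2 * lm - mu)" using s pos by (auto simp: K_def)
  have "(1 - lm / x) * (L / (x - mu)) = (x - lm) / (x - mu) * (L / x)"
    using pos by (simp add: field_simps)
  also have "\<dots> \<le> L / x"
    using pos mu mult_right_mono[of "(x - lm) / (x - mu)" 1 "L / x"] by auto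
  finally have "((1 - lm / x) * (L / (x - mu)))\<^sup>2 * a0 \<le> (L / x)\<^sup>2 * a0"
    using pos mu a0 by (intro mult_right_mono power_mono) (auto simp: field_simps)
  then have "(1 - lm / x)\<^sup>2 * ((L / (x - mu))\<^sup>2 * a0) \<le> (L / x)\<^sup>2 * a0"
    by (simp only: power_mult_distrib mult.assoc)
  moreover have "(1 - lm / x)\<^sup>2 * (K / (x - mu) + s / (x - mu)\<^sup>2) \<le> K / x"
    unfolding K(2) using mu x K(1) by (intro inverse_time_noise_step_le) auto
  moreover have "(1 - lm / x)\<^sup>2 * a \<le> (1 - lm / x)\<^sup>2 * ((L / (x - mu))\<^sup>2 * a0 + K / (x - mu) + s / (x - mu)\<^sup>2)"
    using a by (intro mult_left_mono) (auto simp: K_def)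
  ultimately show ?thesis by (simp add: K_def distrib_left)
qed

lemma inverse_time_recursion_le:
  fixes a :: "nat \<Rightarrow> real" and L mu lm s :: real
  assumes mu: "0 < mu" "mu \<le> lm" "lm \<le> L" and s: "0 \<le> s" and a0: "0 \<le> a 0"
    and step: "\<And>k. a (Suc k) \<le> (1 - lm / (L + mu * real (Suc k)))\<^sup>2 * a k
                               + s / (L + mu * real (Suc k))\<^sup>2"
  shows "a t \<le> (L / (L + mu * real t))\<^sup>2 * a 0 + s / (2 * lm - mu) / (L + mu * real t)
               + s / (L + mu * real t)\<^sup>2"
proof (induction t)
  case 0
  then show ?case using mu s by simp
next
  case (Suc k)
  have "L + mu * real k = (L + mu * real (Suc k)) - mu" by (simp add: algebra_simps)
  with Suc.IH have "(1 - lm / (L + mu * real (Suc k)))\<^sup>2 * a k + s / (L + mu * real (Suc k))\<^sup>2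
      \<le> (L / (L + mu * real (Suc k)))\<^sup>2 * a 0 + s / (2 * lm - mu) / (L + mu * real (Suc k))
        + s / (L + mu * real (Suc k))\<^sup>2"
    using mu s a0 by (intro inverse_time_step_le) auto
  with step[of k] show ?case by linarith
qed

lemma integrable_mult_of_squares:
  fixes f g :: "'a \<Rightarrow> real"
  assumes "integrable M (\<lambda>x. (f x)\<^sup>2)" "integrable M (\<lambda>x. (g x)\<^sup>2)"
    and "f \<in> borel_measurable M" "g \<in> borel_measurable M"
  shows "integrable M (\<lambda>x. f x * g x)"
proof (rule Bochner_Integration.integrable_bound)
  show "integrable M (\<lambda>x. (f x)\<^sup>2 + (g x)\<^sup>2)" using assms by auto
  have "\<bar>a * b\<bar> \<le> a\<^sup>2 + b\<^sup>2" for a b :: real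
  proof -
    have "2 * \<bar>a\<bar> * \<bar>b\<bar> \<le> a\<^sup>2 + b\<^sup>2"
      using sum_squares_bound[of "\<bar>a\<bar>" "\<bar>b\<bar>"] by simp
    moreover have "0 \<le> \<bar>a\<bar> * \<bar>b\<bar>" by simp
    ultimately show ?thesis unfolding abs_mult by linarith
  qed
  then show "AE x in M. norm (f x * g x) \<le> norm ((f x)\<^sup>2 + (g x)\<^sup>2)" by simp
qed (use assms in auto)

lemma sgd_iter_cong:
  assumes "\<And>i. 1 \<le> i \<Longrightarrow> i \<le> k \<Longrightarrow> \<xi> i \<omega> = \<xi>' i \<omega>'"
  shows "sgd_iter \<xi> Hs bs d L \<mu> w1 k \<omega> = sgd_iter \<xi>' Hs bs d L \<mu> w1 k \<omega>'"
  using assms by (induction k) (auto simp: Let_def)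

lemma measurable_sgd_iter_PiM:
  assumes Hs_meas: "\<forall>i k. (\<lambda>x. Hs x i k) \<in> borel_measurable N"
    and bs_meas: "\<forall>i. (\<lambda>x. bs x i) \<in> borel_measurable N"
    and "{1..k} \<subseteq> I"
  shows "(\<lambda>f. sgd_iter (\<lambda>i _. f i) Hs bs d L \<mu> w1 k () j) \<in> borel_measurable (PiM I (\<lambda>_. N))"
  using assms(3)
proof (induction k arbitrary: j)
  case 0
  then show ?case by simp
next
  case (Suc k)
  have "(\<lambda>f. f (Suc k)) \<in> measurable (PiM I (\<lambda>_. N)) N"
    using Suc.prems by (intro measurable_component_singleton) auto
  then have "(\<lambda>f. Hs (f (Suc k)) i l) \<in> borel_measurable (PiM I (\<lambda>_. N))"
    and "(\<lambda>f. bs (f (Suc k)) i) \<in> borel_measurable (PiM I (\<lambda>_. N))" for i l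
    using Hs_meas bs_meas by (auto intro: measurable_compose)
  moreover have "(\<lambda>f. sgd_iter (\<lambda>i _. f i) Hs bs d L \<mu> w1 k () i) \<in> borel_measurable (PiM I (\<lambda>_. N))" for i
    using Suc.prems by (intro Suc.IH) auto
  ultimately show ?case
    unfolding sgd_iter.simps Let_def
    by (intro borel_measurable_diff borel_measurable_times borel_measurable_sum borel_measurable_const)
qed

lemma sgd_iter_factors_through_past:
  assumes Hs_meas: "\<forall>i k. (\<lambda>x. Hs x i k) \<in> borel_measurable N"
    and bs_meas: "\<forall>i. (\<lambda>x. bs x i) \<in> borel_measurable N"
  obtains G where "\<And>j. (\<lambda>f. G f j) \<in> borel_measurable (PiM {1..k} (\<lambda>_. N))"
    and "\<And>\<omega>. sgd_iter \<xi> Hs bs d L \<mu> w1 k \<omega> = G (\<lambda>i\<in>{1..k}. \<xi> i \<omega>)"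
proof
  show "(\<lambda>f. sgd_iter (\<lambda>i _. f i) Hs bs d L \<mu> w1 k () j) \<in> borel_measurable (PiM {1..k} (\<lambda>_. N))"
    for j using measurable_sgd_iter_PiM[OF Hs_meas bs_meas] by simp
  show "sgd_iter \<xi> Hs bs d L \<mu> w1 k \<omega> = sgd_iter (\<lambda>i _. (\<lambda>i\<in>{1..k}. \<xi> i \<omega>) i) Hs bs d L \<mu> w1 k ()"
    for \<omega> by (rule sgd_iter_cong) simp
qed

lemma measurable_sgd_iter:
  assumes Hs_meas: "\<forall>i k. (\<lambda>x. Hs x i k) \<in> borel_measurable N"
    and bs_meas: "\<forall>i. (\<lambda>x. bs x i) \<in> borel_measurable N"
    and rv: "\<forall>t\<ge>1. \<xi> t \<in> measurable M N"
  shows "(\<lambda>\<omega>. sgd_iter \<xi> Hs bs d L \<mu> w1 k \<omega> j) \<in> borel_measurable M"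
proof -
  obtain G where G: "(\<lambda>f. G f j) \<in> borel_measurable (PiM {1..k} (\<lambda>_. N))"
    and eq: "\<And>\<omega>. sgd_iter \<xi> Hs bs d L \<mu> w1 k \<omega> = G (\<lambda>i\<in>{1..k}. \<xi> i \<omega>)"
    using sgd_iter_factors_through_past[OF Hs_meas bs_meas] by metis
  have "(\<lambda>\<omega>. \<lambda>i\<in>{1..k}. \<xi> i \<omega>) \<in> measurable M (PiM {1..k} (\<lambda>_. N))"
    using rv by (intro measurable_restrict) auto
  from measurable_compose[OF this G] show ?thesis unfolding eq .
qed

lemma (in prob_space) integral_past_times_centered_next:
  fixes Y :: "(nat \<Rightarrow> 'b) \<Rightarrow> real" and g :: "'b \<Rightarrow> real"
  assumes indep: "indep_vars (\<lambda>_. N) \<xi> {1..}"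
    and ident: "distr M N (\<xi> (Suc k)) = distr M N (\<xi> 1)"
    and Y: "Y \<in> borel_measurable (PiM {1..k} (\<lambda>_. N))"
      "integrable M (\<lambda>\<omega>. Y (\<lambda>i\<in>{1..k}. \<xi> i \<omega>))"
    and g: "g \<in> borel_measurable N" "integrable M (\<lambda>\<omega>. g (\<xi> 1 \<omega>))"
  shows "integrable M (\<lambda>\<omega>. Y (\<lambda>i\<in>{1..k}. \<xi> i \<omega>) * (expectation (\<lambda>\<omega>. g (\<xi> 1 \<omega>)) - g (\<xi> (Suc k) \<omega>)))"
    and "expectation (\<lambda>\<omega>. Y (\<lambda>i\<in>{1..k}. \<xi> i \<omega>) * (expectation (\<lambda>\<omega>. g (\<xi> 1 \<omega>)) - g (\<xi> (Suc k) \<omega>))) = 0"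
proof -
  let ?c = "expectation (\<lambda>\<omega>. g (\<xi> 1 \<omega>))"
  have rv: "\<xi> (Suc k) \<in> measurable M N" "\<xi> 1 \<in> measurable M N"
    using indep unfolding indep_vars_def by auto
  have "indep_var (PiM {1..k} (\<lambda>_. N)) (\<lambda>\<omega>. \<lambda>i\<in>{1..k}. \<xi> i \<omega>)
          (PiM {Suc k} (\<lambda>_. N)) (\<lambda>\<omega>. \<lambda>i\<in>{Suc k}. \<xi> i \<omega>)"
    by (rule indep_var_restrict[OF indep]) auto
  then have "indep_var borel (Y \<circ> (\<lambda>\<omega>. \<lambda>i\<in>{1..k}. \<xi> i \<omega>))
      borel ((\<lambda>f. ?c - g (f (Suc k))) \<circ> (\<lambda>\<omega>. \<lambda>i\<in>{Suc k}. \<xi> i \<omega>))"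
    by (rule indep_var_compose[OF _ Y(1)]) (use g(1) in measurable)
  then have indep_next: "indep_var borel (\<lambda>\<omega>. Y (\<lambda>i\<in>{1..k}. \<xi> i \<omega>)) borel (\<lambda>\<omega>. ?c - g (\<xi> (Suc k) \<omega>))"
    by (simp add: comp_def)
  have "integrable M (\<lambda>\<omega>. g (\<xi> (Suc k) \<omega>))"
    using g integrable_distr_eq[OF rv(1) g(1)] integrable_distr_eq[OF rv(2) g(1)] ident by simp
  moreover have "expectation (\<lambda>\<omega>. g (\<xi> (Suc k) \<omega>)) = ?c"
    using integral_distr[OF rv(1) g(1)] integral_distr[OF rv(2) g(1)] ident by simp
  ultimately have centered: "integrable M (\<lambda>\<omega>. ?c - g (\<xi> (Suc k) \<omega>))"
      "expectation (\<lambda>\<omega>. ?c - g (\<xi> (Suc k) \<omega>)) = 0"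
    by (simp_all add: prob_space)
  show "integrable M (\<lambda>\<omega>. Y (\<lambda>i\<in>{1..k}. \<xi> i \<omega>) * (?c - g (\<xi> (Suc k) \<omega>)))"
    by (rule indep_var_integrable[OF indep_next Y(2) centered(1)])
  show "expectation (\<lambda>\<omega>. Y (\<lambda>i\<in>{1..k}. \<xi> i \<omega>) * (?c - g (\<xi> (Suc k) \<omega>))) = 0"
    using indep_var_lebesgue_integral[OF indep_next Y(2) centered(1)] centered(2) by simp
qed

lemma fobj_eq_mean_quadratic:
  assumes Hs_int: "\<forall>i\<in>{1..d}. \<forall>k\<in>{1..d}. integrable M (\<lambda>\<omega>. Hs (\<xi> 1 \<omega>) i k)"
    and bs_int: "\<forall>i\<in>{1..d}. integrable M (\<lambda>\<omega>. bs (\<xi> 1 \<omega>) i)"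
  shows "fobj M \<xi> Hs bs d w = (1/2) * (\<Sum>i=1..d. \<Sum>k=1..d. w i * Hmean M \<xi> Hs i k * w k)
          - (\<Sum>j=1..d. bmean M \<xi> bs j * w j)"
proof -
  have "(\<integral>\<omega>. (\<Sum>i=1..d. \<Sum>k=1..d. w i * Hs (\<xi> 1 \<omega>) i k * w k) \<partial>M)
      = (\<Sum>i=1..d. \<integral>\<omega>. (\<Sum>k=1..d. w i * Hs (\<xi> 1 \<omega>) i k * w k) \<partial>M)"
    using Hs_int by (intro Bochner_Integration.integral_sum Bochner_Integration.integrable_sum) auto
  also have "\<dots> = (\<Sum>i=1..d. \<Sum>k=1..d. \<integral>\<omega>. w i * Hs (\<xi> 1 \<omega>) i k * w k \<partial>M)"
    using Hs_int by (intro sum.cong refl Bochner_Integration.integral_sum) auto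
  finally have quad: "(\<integral>\<omega>. (\<Sum>i=1..d. \<Sum>k=1..d. w i * Hs (\<xi> 1 \<omega>) i k * w k) \<partial>M)
      = (\<Sum>i=1..d. \<Sum>k=1..d. w i * Hmean M \<xi> Hs i k * w k)"
    by (simp add: Hmean_def)
  have lin: "(\<integral>\<omega>. (\<Sum>j=1..d. bs (\<xi> 1 \<omega>) j * w j) \<partial>M) = (\<Sum>j=1..d. bmean M \<xi> bs j * w j)"
    using bs_int by (simp add: bmean_def Bochner_Integration.integral_sum)
  have "integrable M (\<lambda>\<omega>. (1/2) * (\<Sum>i=1..d. \<Sum>k=1..d. w i * Hs (\<xi> 1 \<omega>) i k * w k))"
    and "integrable M (\<lambda>\<omega>. (\<Sum>j=1..d. bs (\<xi> 1 \<omega>) j * w j))"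
    using Hs_int bs_int by (auto intro!: Bochner_Integration.integrable_sum)
  then show ?thesis
    unfolding fobj_def by (simp only: Bochner_Integration.integral_diff integral_mult_right_zero quad lin)
qed

lemma quadratic_form_unit_vector:
  fixes F :: "nat \<Rightarrow> nat \<Rightarrow> real"
  assumes "finite S" "j \<in> S"
  shows "(\<Sum>i\<in>S. \<Sum>l\<in>S. of_bool (i = j) * of_bool (l = j) * F i l) = F j j"
  using assms by (simp add: mult.assoc flip: sum_distrib_left)

locale diagonal_quadratic_sgd = prob_space M
  for M :: "'a measure" and N :: "'b measure" and \<xi> :: "nat \<Rightarrow> 'a \<Rightarrow> 'b"
    and Hs :: "'b \<Rightarrow> nat \<Rightarrow> nat \<Rightarrow> real" and bs :: "'b \<Rightarrow> nat \<Rightarrow> real"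
    and d :: nat and lam :: "nat \<Rightarrow> real" and \<sigma> :: real and w1 wstar :: "nat \<Rightarrow> real" +
  assumes d: "d \<ge> 1"
    and lam_pos: "\<forall>j\<in>{1..d}. lam j > 0"
    and lam_dec: "\<forall>i j. 1 \<le> i \<and> i \<le> j \<and> j \<le> d \<longrightarrow> lam j \<le> lam i"
    and rv: "\<forall>t\<ge>1. \<xi> t \<in> measurable M N"
    and indep: "indep_vars (\<lambda>_. N) \<xi> {1..}"
    and ident: "\<forall>t\<ge>1. distr M N (\<xi> t) = distr M N (\<xi> 1)"
    and Hs_meas: "\<forall>i k. (\<lambda>x. Hs x i k) \<in> borel_measurable N"
    and bs_meas: "\<forall>i. (\<lambda>x. bs x i) \<in> borel_measurable N"
    and Hs_int: "\<forall>i\<in>{1..d}. \<forall>k\<in>{1..d}. integrable M (\<lambda>\<omega>. Hs (\<xi> 1 \<omega>) i k)"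
    and bs_int: "\<forall>i\<in>{1..d}. integrable M (\<lambda>\<omega>. bs (\<xi> 1 \<omega>) i)"
    and H_diag: "\<forall>i\<in>{1..d}. \<forall>k\<in>{1..d}. Hmean M \<xi> Hs i k = (if i = k then lam i else 0)"
    and wstar: "\<forall>j\<in>{1..d}. (\<Sum>k=1..d. Hmean M \<xi> Hs j k * wstar k) = bmean M \<xi> bs j"
    and noise_int: "\<forall>t\<ge>1. \<forall>i\<in>{1..d}. \<forall>k\<in>{1..d}.
        integrable M (\<lambda>\<omega>. noise M \<xi> Hs bs d (lam 1) (lam d) w1 t \<omega> i
                          * noise M \<xi> Hs bs d (lam 1) (lam d) w1 t \<omega> k)"
    and noise_bound: "\<forall>t\<ge>1. \<forall>v :: nat \<Rightarrow> real.
        (\<Sum>i=1..d. \<Sum>k=1..d. v i * v k *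
           (\<integral>\<omega>. noise M \<xi> Hs bs d (lam 1) (lam d) w1 t \<omega> i
                 * noise M \<xi> Hs bs d (lam 1) (lam d) w1 t \<omega> k \<partial>M))
        \<le> \<sigma>\<^sup>2 * (\<Sum>i=1..d. \<Sum>k=1..d. v i * Hmean M \<xi> Hs i k * v k)"
begin

(* Indexing follows sgd_iter: iterate k is w_(k+1) and err k is e_(k+1), whereas nz t is n_t;
   inv_step k is 1/eta_k. *)

abbreviation iterate :: "nat \<Rightarrow> 'a \<Rightarrow> nat \<Rightarrow> real" where
  "iterate \<equiv> sgd_iter \<xi> Hs bs d (lam 1) (lam d) w1"

abbreviation err :: "nat \<Rightarrow> 'a \<Rightarrow> nat \<Rightarrow> real" where
  "err k \<omega> j \<equiv> iterate k \<omega> j - wstar j"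

abbreviation nz :: "nat \<Rightarrow> 'a \<Rightarrow> nat \<Rightarrow> real" where
  "nz \<equiv> noise M \<xi> Hs bs d (lam 1) (lam d) w1"

abbreviation inv_step :: "nat \<Rightarrow> real" where
  "inv_step k \<equiv> lam 1 + lam d * real k"

lemma lam_bounds:
  assumes "j \<in> {1..d}"
  shows "lam d \<le> lam j" "lam j \<le> lam 1" "0 < lam j"
  using assms lam_dec lam_pos d by auto

lemma lam_d_pos: "0 < lam d"
  using lam_pos d by auto

lemma inv_step_pos: "0 < inv_step k"
  using lam_d_pos lam_bounds[of d] d by (simp add: add_pos_nonneg)

lemma Hmean_row_mult:
  assumes "j \<in> {1..d}"
  shows "(\<Sum>i=1..d. Hmean M \<xi> Hs j i * v i) = lam j * v j"
proof -
  have "(\<Sum>i=1..d. Hmean M \<xi> Hs j i * v i) = (\<Sum>i=1..d. if i = j then lam j * v j else 0)"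
    using assms H_diag by (intro sum.cong) auto
  then show ?thesis using assms by simp
qed

lemma Hmean_quadratic_form:
  "(\<Sum>i=1..d. \<Sum>k=1..d. v i * Hmean M \<xi> Hs i k * v k) = (\<Sum>i=1..d. lam i * (v i)\<^sup>2)"
proof (intro sum.cong refl)
  fix i assume i: "i \<in> {1..d}"
  have "(\<Sum>k=1..d. v i * Hmean M \<xi> Hs i k * v k) = v i * (\<Sum>k=1..d. Hmean M \<xi> Hs i k * v k)"
    by (simp only: sum_distrib_left mult.assoc)
  then show "(\<Sum>k=1..d. v i * Hmean M \<xi> Hs i k * v k) = lam i * (v i)\<^sup>2"
    by (simp only: Hmean_row_mult[OF i]) (simp add: power2_eq_square)
qed

lemma bmean_eq:
  assumes "j \<in> {1..d}"
  shows "bmean M \<xi> bs j = lam j * wstar j"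
  using assms wstar Hmean_row_mult by auto

lemma fobj_excess_eq:
  "2 * (fobj M \<xi> Hs bs d v - fobj M \<xi> Hs bs d wstar) = (\<Sum>j=1..d. lam j * (v j - wstar j)\<^sup>2)"
proof -
  have lin: "(\<Sum>j=1..d. bmean M \<xi> bs j * u j) = (\<Sum>j=1..d. lam j * wstar j * u j)" for u
    by (intro sum.cong refl) (simp add: bmean_eq)
  have fobj: "fobj M \<xi> Hs bs d u = (1/2) * (\<Sum>j=1..d. lam j * (u j)\<^sup>2) - (\<Sum>j=1..d. lam j * wstar j * u j)" for u
    unfolding fobj_eq_mean_quadratic[where M = M and \<xi> = \<xi> and Hs = Hs and bs = bs, OF Hs_int bs_int]
      Hmean_quadratic_form lin ..
  have "(\<Sum>j=1..d. lam j * wstar j * wstar j) = (\<Sum>j=1..d. lam j * (wstar j)\<^sup>2)"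
    by (simp add: power2_eq_square mult.assoc)
  moreover have "(\<Sum>j=1..d. lam j * (v j - wstar j)\<^sup>2)
      = (\<Sum>j=1..d. lam j * (v j)\<^sup>2) - 2 * (\<Sum>j=1..d. lam j * wstar j * v j) + (\<Sum>j=1..d. lam j * (wstar j)\<^sup>2)"
    by (simp add: power2_eq_square algebra_simps sum.distrib sum_subtractf sum_distrib_left)
  ultimately show ?thesis
    unfolding fobj by (simp add: algebra_simps)
qed

lemma noise_Suc:
  "nz (Suc k) \<omega> j = (\<Sum>i=1..d. (Hmean M \<xi> Hs j i - Hs (\<xi> (Suc k) \<omega>) j i) * iterate k \<omega> i)
                     - (bmean M \<xi> bs j - bs (\<xi> (Suc k) \<omega>) j)"
  by (simp add: noise_def Let_def sum_subtractf left_diff_distrib)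

lemma err_Suc:
  assumes j: "j \<in> {1..d}"
  shows "err (Suc k) \<omega> j
    = (1 - lam j / inv_step (Suc k)) * err k \<omega> j + (1 / inv_step (Suc k)) * nz (Suc k) \<omega> j"
proof -
  let ?g = "(\<Sum>i=1..d. Hs (\<xi> (Suc k) \<omega>) j i * iterate k \<omega> i) - bs (\<xi> (Suc k) \<omega>) j"
  have affine: "a - (1 / x) * g - w = (1 - l / x) * (a - w) + (1 / x) * ((l * a - l * w) - g)"
    for a g l w x :: real
    by (simp add: algebra_simps diff_divide_distrib)
  have iterate_Suc: "iterate (Suc k) \<omega> j = iterate k \<omega> j - (1 / inv_step (Suc k)) * ?g"
    by (simp only: sgd_iter.simps Let_def)
  have noise_eq: "nz (Suc k) \<omega> j = (lam j * iterate k \<omega> j - lam j * wstar j) - ?g"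
    by (simp only: noise_def Let_def diff_Suc_1 Hmean_row_mult[OF j] bmean_eq[OF j])
  show ?thesis
    unfolding iterate_Suc noise_eq by (rule affine)
qed

lemma measurable_iterate: "(\<lambda>\<omega>. iterate k \<omega> j) \<in> borel_measurable M"
  using measurable_sgd_iter[OF Hs_meas bs_meas rv] .

lemma measurable_noise: "(\<lambda>\<omega>. nz (Suc k) \<omega> j) \<in> borel_measurable M"
proof -
  have sample: "\<xi> (Suc k) \<in> measurable M N" using rv by simp
  have "(\<lambda>\<omega>. Hs (\<xi> (Suc k) \<omega>) j i) \<in> borel_measurable M" for i
    using measurable_compose[OF sample] Hs_meas by blast
  moreover have "(\<lambda>\<omega>. bs (\<xi> (Suc k) \<omega>) j) \<in> borel_measurable M"
    using measurable_compose[OF sample] bs_meas by blast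
  ultimately show ?thesis
    unfolding noise_Suc
    by (intro borel_measurable_diff borel_measurable_sum borel_measurable_times
        measurable_iterate borel_measurable_const) auto
qed

lemma integrable_noise_sq:
  assumes "j \<in> {1..d}"
  shows "integrable M (\<lambda>\<omega>. (nz (Suc k) \<omega> j)\<^sup>2)"
  using assms noise_int by (simp add: power2_eq_square)

lemma noise_second_moment_le:
  assumes j: "j \<in> {1..d}"
  shows "expectation (\<lambda>\<omega>. (nz (Suc k) \<omega> j)\<^sup>2) \<le> \<sigma>\<^sup>2 * lam j"
proof -
  let ?e = "\<lambda>i. of_bool (i = j) :: real"
  have "expectation (\<lambda>\<omega>. (nz (Suc k) \<omega> j)\<^sup>2)
      = (\<Sum>i=1..d. \<Sum>l=1..d. ?e i * ?e l * expectation (\<lambda>\<omega>. nz (Suc k) \<omega> i * nz (Suc k) \<omega> l))"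
    using j by (simp only: quadratic_form_unit_vector finite_atLeastAtMost power2_eq_square)
  also have "\<dots> \<le> \<sigma>\<^sup>2 * (\<Sum>i=1..d. \<Sum>l=1..d. ?e i * Hmean M \<xi> Hs i l * ?e l)"
    by (rule noise_bound[rule_format]) simp
  also have "(\<Sum>i=1..d. \<Sum>l=1..d. ?e i * Hmean M \<xi> Hs i l * ?e l) = (\<Sum>i=1..d. if i = j then lam j else 0)"
    unfolding Hmean_quadratic_form by (intro sum.cong) auto
  also have "\<dots> = lam j"
    using j by simp
  finally show ?thesis .
qed

lemma integrable_err_sq:
  assumes j: "j \<in> {1..d}"
  shows "integrable M (\<lambda>\<omega>. (err k \<omega> j)\<^sup>2)"
proof (induction k)
  case 0
  then show ?case by simp
next
  case (Suc k)
  have expand: "(a * X + b * Y)\<^sup>2 = a\<^sup>2 * X\<^sup>2 + (2 * a * b) * (X * Y) + b\<^sup>2 * Y\<^sup>2" for a b X Y :: real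
    by (simp add: power2_eq_square algebra_simps)
  have cross: "integrable M (\<lambda>\<omega>. err k \<omega> j * nz (Suc k) \<omega> j)"
    using Suc.IH integrable_noise_sq[OF j] measurable_iterate measurable_noise
    by (intro integrable_mult_of_squares) auto
  show ?case
    unfolding err_Suc[OF j] expand
    using Suc.IH cross integrable_noise_sq[OF j] by simp
qed

lemma integrable_err:
  assumes "j \<in> {1..d}"
  shows "integrable M (\<lambda>\<omega>. err k \<omega> j)"
proof (rule square_integrable_imp_integrable)
  show "(\<lambda>\<omega>. err k \<omega> j) \<in> borel_measurable M"
    by (intro borel_measurable_diff measurable_iterate borel_measurable_const)
qed (rule integrable_err_sq[OF assms])

lemma err_noise_uncorrelated:
  assumes j: "j \<in> {1..d}"
  shows "expectation (\<lambda>\<omega>. err k \<omega> j * nz (Suc k) \<omega> j) = 0"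
proof -
  obtain G where G: "\<And>i. (\<lambda>f. G f i) \<in> borel_measurable (PiM {1..k} (\<lambda>_. N))"
    and past: "\<And>\<omega>. iterate k \<omega> = G (\<lambda>i\<in>{1..k}. \<xi> i \<omega>)"
    using sgd_iter_factors_through_past[where \<xi> = \<xi> and k = k, OF Hs_meas bs_meas] by blast
  have "distr M N (\<xi> (Suc k)) = distr M N (\<xi> 1)"
    by (rule ident[rule_format]) simp
  note centered = integral_past_times_centered_next[OF indep this]
  have H_term: "integrable M (\<lambda>\<omega>. (err k \<omega> j * iterate k \<omega> i) * (Hmean M \<xi> Hs j i - Hs (\<xi> (Suc k) \<omega>) j i))
      \<and> expectation (\<lambda>\<omega>. (err k \<omega> j * iterate k \<omega> i) * (Hmean M \<xi> Hs j i - Hs (\<xi> (Suc k) \<omega>) j i)) = 0"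
    if i: "i \<in> {1..d}" for i
  proof -
    have "(\<lambda>\<omega>. err k \<omega> j * iterate k \<omega> i) = (\<lambda>\<omega>. err k \<omega> j * err k \<omega> i + wstar i * err k \<omega> j)"
      by (simp add: algebra_simps)
    moreover have "integrable M (\<lambda>\<omega>. err k \<omega> j * err k \<omega> i)"
      using integrable_err_sq[OF j] integrable_err_sq[OF i] measurable_iterate
      by (intro integrable_mult_of_squares) auto
    ultimately have "integrable M (\<lambda>\<omega>. err k \<omega> j * iterate k \<omega> i)"
      using integrable_err[OF j] by simp
    then have "integrable M (\<lambda>\<omega>. (G (\<lambda>i\<in>{1..k}. \<xi> i \<omega>) j - wstar j) * G (\<lambda>i\<in>{1..k}. \<xi> i \<omega>) i)"
      unfolding past .
    moreover have "(\<lambda>f. (G f j - wstar j) * G f i) \<in> borel_measurable (PiM {1..k} (\<lambda>_. N))"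
      using G by measurable
    moreover have "(\<lambda>y. Hs y j i) \<in> borel_measurable N" "integrable M (\<lambda>\<omega>. Hs (\<xi> 1 \<omega>) j i)"
      using Hs_meas Hs_int i j by auto
    ultimately show ?thesis
      unfolding Hmean_def past by (intro conjI centered)
  qed
  have b_term: "integrable M (\<lambda>\<omega>. err k \<omega> j * (bmean M \<xi> bs j - bs (\<xi> (Suc k) \<omega>) j))
      \<and> expectation (\<lambda>\<omega>. err k \<omega> j * (bmean M \<xi> bs j - bs (\<xi> (Suc k) \<omega>) j)) = 0"
  proof -
    have "integrable M (\<lambda>\<omega>. G (\<lambda>i\<in>{1..k}. \<xi> i \<omega>) j - wstar j)"
      using integrable_err[OF j, of k] unfolding past .
    moreover have "(\<lambda>f. G f j - wstar j) \<in> borel_measurable (PiM {1..k} (\<lambda>_. N))"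
      using G by measurable
    moreover have "(\<lambda>y. bs y j) \<in> borel_measurable N" "integrable M (\<lambda>\<omega>. bs (\<xi> 1 \<omega>) j)"
      using bs_meas bs_int j by auto
    ultimately show ?thesis
      unfolding bmean_def past by (intro conjI centered)
  qed
  have "err k \<omega> j * nz (Suc k) \<omega> j
      = (\<Sum>i=1..d. (err k \<omega> j * iterate k \<omega> i) * (Hmean M \<xi> Hs j i - Hs (\<xi> (Suc k) \<omega>) j i))
        - err k \<omega> j * (bmean M \<xi> bs j - bs (\<xi> (Suc k) \<omega>) j)" for \<omega>
    unfolding noise_Suc right_diff_distrib[of "err k \<omega> j"]
    by (simp add: sum_distrib_left mult_ac)
  moreover have "integrable M (\<lambda>\<omega>. \<Sum>i=1..d. (err k \<omega> j * iterate k \<omega> i) * (Hmean M \<xi> Hs j i - Hs (\<xi> (Suc k) \<omega>) j i))"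
    using H_term by (intro Bochner_Integration.integrable_sum) blast
  moreover have "expectation (\<lambda>\<omega>. \<Sum>i=1..d. (err k \<omega> j * iterate k \<omega> i) * (Hmean M \<xi> Hs j i - Hs (\<xi> (Suc k) \<omega>) j i)) = 0"
    using H_term by (subst Bochner_Integration.integral_sum) auto
  ultimately show ?thesis
    using b_term by simp
qed

lemma mean_sq_err_Suc_le:
  assumes j: "j \<in> {1..d}"
  shows "expectation (\<lambda>\<omega>. (err (Suc k) \<omega> j)\<^sup>2)
    \<le> (1 - lam j / inv_step (Suc k))\<^sup>2 * expectation (\<lambda>\<omega>. (err k \<omega> j)\<^sup>2)
       + lam j * \<sigma>\<^sup>2 / (inv_step (Suc k))\<^sup>2"
proof -
  let ?c = "1 - lam j / inv_step (Suc k)" and ?h = "1 / inv_step (Suc k)"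
  have expand: "(a * X + b * Y)\<^sup>2 = a\<^sup>2 * X\<^sup>2 + (2 * a * b) * (X * Y) + b\<^sup>2 * Y\<^sup>2" for a b X Y :: real
    by (simp add: power2_eq_square algebra_simps)
  have cross: "integrable M (\<lambda>\<omega>. err k \<omega> j * nz (Suc k) \<omega> j)"
    using integrable_err_sq[OF j] integrable_noise_sq[OF j] measurable_iterate measurable_noise
    by (intro integrable_mult_of_squares) auto
  have "expectation (\<lambda>\<omega>. (err (Suc k) \<omega> j)\<^sup>2)
      = ?c\<^sup>2 * expectation (\<lambda>\<omega>. (err k \<omega> j)\<^sup>2)
        + (2 * ?c * ?h) * expectation (\<lambda>\<omega>. err k \<omega> j * nz (Suc k) \<omega> j)
        + ?h\<^sup>2 * expectation (\<lambda>\<omega>. (nz (Suc k) \<omega> j)\<^sup>2)"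
    unfolding err_Suc[OF j] expand
    using integrable_err_sq[OF j] cross integrable_noise_sq[OF j] by simp
  also have "\<dots> \<le> ?c\<^sup>2 * expectation (\<lambda>\<omega>. (err k \<omega> j)\<^sup>2) + ?h\<^sup>2 * (\<sigma>\<^sup>2 * lam j)"
    using err_noise_uncorrelated[OF j] noise_second_moment_le[OF j] by (simp add: mult_left_mono)
  also have "\<dots> = ?c\<^sup>2 * expectation (\<lambda>\<omega>. (err k \<omega> j)\<^sup>2) + lam j * \<sigma>\<^sup>2 / (inv_step (Suc k))\<^sup>2"
    by (simp add: power_divide)
  finally show ?thesis .
qed

lemma weighted_mean_sq_err_le:
  assumes j: "j \<in> {1..d}"
  shows "lam j * expectation (\<lambda>\<omega>. (err t \<omega> j)\<^sup>2)
    \<le> ((lam 1 + lam d) / inv_step t)\<^sup>2 * (lam j * (w1 j - wstar j)\<^sup>2)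
       + ((lam j)\<^sup>2 / (2 * lam j - lam d) * (\<sigma>\<^sup>2 / inv_step t) + (lam j)\<^sup>2 * \<sigma>\<^sup>2 / (inv_step t)\<^sup>2)"
proof -
  have "expectation (\<lambda>\<omega>. (err t \<omega> j)\<^sup>2)
      \<le> (lam 1 / inv_step t)\<^sup>2 * expectation (\<lambda>\<omega>. (err 0 \<omega> j)\<^sup>2)
        + lam j * \<sigma>\<^sup>2 / (2 * lam j - lam d) / inv_step t + lam j * \<sigma>\<^sup>2 / (inv_step t)\<^sup>2"
    using lam_d_pos lam_bounds[OF j] mean_sq_err_Suc_le[OF j]
    by (intro inverse_time_recursion_le) auto
  also have "expectation (\<lambda>\<omega>. (err 0 \<omega> j)\<^sup>2) = (w1 j - wstar j)\<^sup>2"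
    by (simp add: prob_space)
  finally have mse: "expectation (\<lambda>\<omega>. (err t \<omega> j)\<^sup>2)
      \<le> (lam 1 / inv_step t)\<^sup>2 * (w1 j - wstar j)\<^sup>2
        + lam j * \<sigma>\<^sup>2 / (2 * lam j - lam d) / inv_step t + lam j * \<sigma>\<^sup>2 / (inv_step t)\<^sup>2" .
  have "(lam 1 / inv_step t)\<^sup>2 \<le> ((lam 1 + lam d) / inv_step t)\<^sup>2"
    using lam_d_pos lam_bounds[OF j] inv_step_pos[of t]
    by (intro power_mono divide_right_mono) auto
  then have "expectation (\<lambda>\<omega>. (err t \<omega> j)\<^sup>2)
      \<le> ((lam 1 + lam d) / inv_step t)\<^sup>2 * (w1 j - wstar j)\<^sup>2
        + lam j * \<sigma>\<^sup>2 / (2 * lam j - lam d) / inv_step t + lam j * \<sigma>\<^sup>2 / (inv_step t)\<^sup>2"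
    using mse mult_right_mono[of _ _ "(w1 j - wstar j)\<^sup>2"] by fastforce
  then have "lam j * expectation (\<lambda>\<omega>. (err t \<omega> j)\<^sup>2)
      \<le> lam j * (((lam 1 + lam d) / inv_step t)\<^sup>2 * (w1 j - wstar j)\<^sup>2
        + lam j * \<sigma>\<^sup>2 / (2 * lam j - lam d) / inv_step t + lam j * \<sigma>\<^sup>2 / (inv_step t)\<^sup>2)"
    using lam_bounds(3)[OF j] by (intro mult_left_mono) auto
  then show ?thesis
    by (simp add: power2_eq_square algebra_simps)
qed

end

theorem proposition2:
  fixes M :: "'a measure" and N :: "'b measure"
    and \<xi> :: "nat \<Rightarrow> 'a \<Rightarrow> 'b"
    and Hs :: "'b \<Rightarrow> nat \<Rightarrow> nat \<Rightarrow> real" and bs :: "'b \<Rightarrow> nat \<Rightarrow> real"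
    and d :: nat and lam :: "nat \<Rightarrow> real" and \<sigma> :: real
    and w1 wstar :: "nat \<Rightarrow> real"
  assumes M: "prob_space M"
    and d: "d \<ge> 1"
    and lam_pos: "\<forall>j\<in>{1..d}. lam j > 0"
    and lam_dec: "\<forall>i j. 1 \<le> i \<and> i \<le> j \<and> j \<le> d \<longrightarrow> lam j \<le> lam i"
    and rv: "\<forall>t\<ge>1. \<xi> t \<in> measurable M N"
    and indep: "prob_space.indep_vars M (\<lambda>_. N) \<xi> {1..}"
    and ident: "\<forall>t\<ge>1. distr M N (\<xi> t) = distr M N (\<xi> 1)"
    and Hs_meas: "\<forall>i k. (\<lambda>x. Hs x i k) \<in> borel_measurable N"
    and bs_meas: "\<forall>i. (\<lambda>x. bs x i) \<in> borel_measurable N"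
    and Hs_sym: "\<forall>x i k. Hs x i k = Hs x k i"
    and Hs_int: "\<forall>i\<in>{1..d}. \<forall>k\<in>{1..d}. integrable M (\<lambda>\<omega>. Hs (\<xi> 1 \<omega>) i k)"
    and bs_int: "\<forall>i\<in>{1..d}. integrable M (\<lambda>\<omega>. bs (\<xi> 1 \<omega>) i)"
    and H_diag: "\<forall>i\<in>{1..d}. \<forall>k\<in>{1..d}. Hmean M \<xi> Hs i k = (if i = k then lam i else 0)"
    and wstar: "\<forall>j\<in>{1..d}. (\<Sum>k=1..d. Hmean M \<xi> Hs j k * wstar k) = bmean M \<xi> bs j"
    and noise_int: "\<forall>t\<ge>1. \<forall>i\<in>{1..d}. \<forall>k\<in>{1..d}.
        integrable M (\<lambda>\<omega>. noise M \<xi> Hs bs d (lam 1) (lam d) w1 t \<omega> i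
                          * noise M \<xi> Hs bs d (lam 1) (lam d) w1 t \<omega> k)"
    and noise_bound: "\<forall>t\<ge>1. \<forall>v :: nat \<Rightarrow> real.
        (\<Sum>i=1..d. \<Sum>k=1..d. v i * v k *
           (\<integral>\<omega>. noise M \<xi> Hs bs d (lam 1) (lam d) w1 t \<omega> i
                 * noise M \<xi> Hs bs d (lam 1) (lam d) w1 t \<omega> k \<partial>M))
        \<le> \<sigma>\<^sup>2 * (\<Sum>i=1..d. \<Sum>k=1..d. v i * Hmean M \<xi> Hs i k * v k)"
    and t: "t \<ge> 1"
  shows "2 * (\<integral>\<omega>. fobj M \<xi> Hs bs d (sgd_iter \<xi> Hs bs d (lam 1) (lam d) w1 t \<omega>)
                   - fobj M \<xi> Hs bs d wstar \<partial>M)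
           = (\<integral>\<omega>. (\<Sum>j=1..d. lam j * (sgd_iter \<xi> Hs bs d (lam 1) (lam d) w1 t \<omega> j - wstar j)\<^sup>2) \<partial>M)
       \<and> (\<integral>\<omega>. (\<Sum>j=1..d. lam j * (sgd_iter \<xi> Hs bs d (lam 1) (lam d) w1 t \<omega> j - wstar j)\<^sup>2) \<partial>M)
           \<le> ((lam 1 + lam d) / (lam 1 + lam d * real t))\<^sup>2 * (\<Sum>j=1..d. lam j * (w1 j - wstar j)\<^sup>2)
             + (\<Sum>j=1..d. (lam j)\<^sup>2 / (2 * lam j - lam d) * (\<sigma>\<^sup>2 / (lam 1 + lam d * real t))
                          + (lam j)\<^sup>2 * \<sigma>\<^sup>2 / (lam 1 + lam d * real t)\<^sup>2)"
proof -
  interpret diagonal_quadratic_sgd M N \<xi> Hs bs d lam \<sigma> w1 wstar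
    by (intro diagonal_quadratic_sgd.intro diagonal_quadratic_sgd_axioms.intro M)
       (fact d lam_pos lam_dec rv indep ident Hs_meas bs_meas Hs_int bs_int H_diag wstar
          noise_int noise_bound)+
  have "2 * (\<integral>\<omega>. fobj M \<xi> Hs bs d (iterate t \<omega>) - fobj M \<xi> Hs bs d wstar \<partial>M)
      = (\<integral>\<omega>. (\<Sum>j=1..d. lam j * (err t \<omega> j)\<^sup>2) \<partial>M)"
    unfolding integral_mult_right_zero[symmetric] fobj_excess_eq ..
  moreover have "(\<integral>\<omega>. (\<Sum>j=1..d. lam j * (err t \<omega> j)\<^sup>2) \<partial>M)
      = (\<Sum>j=1..d. lam j * (\<integral>\<omega>. (err t \<omega> j)\<^sup>2 \<partial>M))"
    using integrable_err_sq by (subst Bochner_Integration.integral_sum) auto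
  moreover have "\<dots> \<le> (\<Sum>j=1..d. ((lam 1 + lam d) / inv_step t)\<^sup>2 * (lam j * (w1 j - wstar j)\<^sup>2)
      + ((lam j)\<^sup>2 / (2 * lam j - lam d) * (\<sigma>\<^sup>2 / inv_step t) + (lam j)\<^sup>2 * \<sigma>\<^sup>2 / (inv_step t)\<^sup>2))"
    by (rule sum_mono) (rule weighted_mean_sq_err_le)
  ultimately show ?thesis
    by (simp add: sum.distrib sum_distrib_left)
qed

end
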